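(* Let $E$ be a group and $B$ a subgroup of finite index $n$, with right transversal $\{t_1,\dots,t_n\}$; for $x\in E$ write $t_{ix}$ for the transversal element with $Bt_ix=Bt_{ix}$. Let $\pi:B\to B/V(B)$ be the natural map, $b\mapsto\bar b$. Fix $y_1,\dots,y_r\in B$ and define $\tau:E\to B/V(B)$ by $$x\tau=\prod_{i=1}^n\big[w(\bar y_1,\dots,\bar y_r),(t_ixt_{ix}^{-1})\pi\big].$$ Then $\tau$ is a well-defined homomorphism which does not depend on the choice of the transversal. Moreover, if $x\in V^*(E)$ then $x\tau=\overline{[w(y_1,\dots,y_r),x^n]}$.
   Context: Commutators: $[a,b]=a^{-1}b^{-1}ab$, $[a_1,\dots,a_n]=[[a_1,\dots,a_{n-1}],a_n]$. Outer commutator words are defined inductively: each variable $x_i$ is one of weight $1$; if $u(x_1,\dots,x_s)$ and $v(x_{s+1},\dots,x_{s+t})$ are outer commutator words in disjoint variables, then $[u,v]$ is one of weight $s+t$. Let $w=w(x_1,\dots,x_r)$ be an outer commutator word and let $\mathcal V$ be the variety defined by the single law $[w(x_1,\dots,x_r),x_{r+1},x_{r+2}]$ (the centre-by-centre-by-$w$ variety). For a group $G$, $V(G)$ is the verbal subgroup generated by all values $[w(g_1,\dots,g_r),g_{r+1},g_{r+2}]$, and the marginal subgroup $V^*(G)$ is the set of $a\in G$ such that replacing any one argument $g_i$ by $g_ia$ does not change the value $[w(g_1,\dots,g_r),g_{r+1},g_{r+2}]$, for all $g_j\in G$. *)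

theory Defs
  imports "HOL-Algebra.Algebra"
begin

definition comm :: "('a, 'b) monoid_scheme \<Rightarrow> 'a \<Rightarrow> 'a \<Rightarrow> 'a" where
  "comm G a b = inv\<^bsub>G\<^esub> a \<otimes>\<^bsub>G\<^esub> inv\<^bsub>G\<^esub> b \<otimes>\<^bsub>G\<^esub> a \<otimes>\<^bsub>G\<^esub> b"

(* Outer commutator words: the shape (bracketing) of the word; the variables
   x_1,...,x_r are read off the leaves from left to right, so distinct leaves
   carry distinct variables (disjointness is built in). *)
datatype ocword = OVar | OComm ocword ocword

fun weight :: "ocword \<Rightarrow> nat" where
  "weight OVar = 1"
| "weight (OComm u v) = weight u + weight v"

fun oc_eval :: "('a, 'b) monoid_scheme \<Rightarrow> ocword \<Rightarrow> 'a list \<Rightarrow> 'a" where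
  "oc_eval G OVar gs = hd gs"
| "oc_eval G (OComm u v) gs =
     comm G (oc_eval G u (take (weight u) gs)) (oc_eval G v (drop (weight u) gs))"

(* value of the law [w(x_1,...,x_r), x_{r+1}, x_{r+2}] at a list gs of length r+2 *)
definition law_val :: "('a, 'b) monoid_scheme \<Rightarrow> ocword \<Rightarrow> 'a list \<Rightarrow> 'a" where
  "law_val G w gs =
     comm G (comm G (oc_eval G w (take (weight w) gs)) (gs ! weight w)) (gs ! (weight w + 1))"

definition verbal :: "('a, 'b) monoid_scheme \<Rightarrow> ocword \<Rightarrow> 'a set" where
  "verbal G w = generate G {law_val G w gs | gs.
       length gs = weight w + 2 \<and> set gs \<subseteq> carrier G}"

definition marginal :: "('a, 'b) monoid_scheme \<Rightarrow> ocword \<Rightarrow> 'a set" where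
  "marginal G w = {a \<in> carrier G. \<forall>gs. length gs = weight w + 2 \<and> set gs \<subseteq> carrier G \<longrightarrow>
       (\<forall>i < weight w + 2. law_val G w (gs[i := gs ! i \<otimes>\<^bsub>G\<^esub> a]) = law_val G w gs)}"

definition right_transversal :: "('a, 'b) monoid_scheme \<Rightarrow> 'a set \<Rightarrow> nat \<Rightarrow> (nat \<Rightarrow> 'a) \<Rightarrow> bool" where
  "right_transversal E B n t \<longleftrightarrow> (\<forall>i<n. t i \<in> carrier E) \<and>
       bij_betw (\<lambda>i. B #>\<^bsub>E\<^esub> t i) {..<n} (rcosets\<^bsub>E\<^esub> B)"

definition trep :: "('a, 'b) monoid_scheme \<Rightarrow> 'a set \<Rightarrow> nat \<Rightarrow> (nat \<Rightarrow> 'a) \<Rightarrow> 'a \<Rightarrow> 'a" where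
  "trep E B n t g = t (THE j. j < n \<and> B #>\<^bsub>E\<^esub> g = B #>\<^bsub>E\<^esub> t j)"

(* ordered product g_1 g_2 ... g_k in a (not necessarily commutative) monoid *)
definition list_prod :: "('a, 'b) monoid_scheme \<Rightarrow> 'a list \<Rightarrow> 'a" where
  "list_prod G xs = foldr (\<lambda>a b. a \<otimes>\<^bsub>G\<^esub> b) xs \<one>\<^bsub>G\<^esub>"

definition BmodV :: "('a, 'b) monoid_scheme \<Rightarrow> 'a set \<Rightarrow> ocword \<Rightarrow> 'a set monoid" where
  "BmodV E B w = (E\<lparr>carrier := B\<rparr>) Mod (verbal (E\<lparr>carrier := B\<rparr>) w)"

definition natpi :: "('a, 'b) monoid_scheme \<Rightarrow> 'a set \<Rightarrow> ocword \<Rightarrow> 'a \<Rightarrow> 'a set" where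
  "natpi E B w b = verbal (E\<lparr>carrier := B\<rparr>) w #>\<^bsub>E\<^esub> b"

definition tau :: "('a, 'b) monoid_scheme \<Rightarrow> 'a set \<Rightarrow> ocword \<Rightarrow> 'a list \<Rightarrow> nat \<Rightarrow> (nat \<Rightarrow> 'a) \<Rightarrow> 'a \<Rightarrow> 'a set" where
  "tau E B w ys n t x = list_prod (BmodV E B w)
     (map (\<lambda>i. comm (BmodV E B w)
                  (oc_eval (BmodV E B w) w (map (natpi E B w) ys))
                  (natpi E B w (t i \<otimes>\<^bsub>E\<^esub> x \<otimes>\<^bsub>E\<^esub> inv\<^bsub>E\<^esub> (trep E B n t (t i \<otimes>\<^bsub>E\<^esub> x)))))
          [0..<n])"

end

theory Submission
  imports Defs
begin

(* Put Q = B/V(B).  Since V(B) contains every value [w, x_(r+1), x_(r+2)] in B, the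
   map c(b) = [w(ybar), b pi] is a homomorphism from B into the centre Z(Q).  Hence tau is the
   classical transfer of c into the abelian group Z(Q), and the first claims are instances of
   two general facts about the transfer  x |-> prod_i f(t_i x t_(ix)^-1)  of a homomorphism f
   from B into an abelian group: the cocycle identity makes it a homomorphism, and changing the
   transversal multiplies the factors by a coboundary, which cancels in the product.  For a
   marginal x we pass to a transversal adapted to the orbits of <x> on the cosets of B; then
   every factor is a conjugate h x^(e_i) h^-1 with sum e_i = n, while on V*(E) the map
   g |-> [w(y), g] is a conjugation-invariant homomorphism with central values, so the product
   collapses to [w(y), x^n] pi. *)

section \<open>Commutators and outer commutator words\<close>

lemma comm_closed:
  "group G \<Longrightarrow> a \<in> carrier G \<Longrightarrow> b \<in> carrier G \<Longrightarrow> comm G a b \<in> carrier G"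
  by (simp add: comm_def monoid.m_closed group.is_monoid)

lemma oc_eval_closed:
  assumes "group G"
  shows "length gs = weight w \<Longrightarrow> set gs \<subseteq> carrier G \<Longrightarrow> oc_eval G w gs \<in> carrier G"
proof (induction w arbitrary: gs)
  case OVar
  then show ?case by (cases gs) auto
next
  case (OComm u v)
  have "oc_eval G u (take (weight u) gs) \<in> carrier G"
    using OComm by (intro OComm.IH(1)) (auto dest: in_set_takeD)
  moreover have "oc_eval G v (drop (weight u) gs) \<in> carrier G"
    using OComm by (intro OComm.IH(2)) (auto dest: in_set_dropD)
  ultimately show ?case using comm_closed[OF assms] by simp
qed

lemma law_val_closed:
  assumes "group G" "length gs = weight w + 2" "set gs \<subseteq> carrier G"
  shows "law_val G w gs \<in> carrier G"
proof -
  have "oc_eval G w (take (weight w) gs) \<in> carrier G"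
    using assms by (intro oc_eval_closed) (auto dest: in_set_takeD)
  moreover have "gs ! weight w \<in> carrier G" "gs ! (weight w + 1) \<in> carrier G"
    using assms(2,3) by (auto simp: subset_iff)
  ultimately show ?thesis unfolding law_val_def by (simp add: comm_closed[OF assms(1)])
qed

lemma (in group_hom) hom_comm:
  "a \<in> carrier G \<Longrightarrow> b \<in> carrier G \<Longrightarrow> h (comm G a b) = comm H (h a) (h b)"
  by (simp add: comm_def)

lemma (in group_hom) hom_oc_eval:
  "length gs = weight w \<Longrightarrow> set gs \<subseteq> carrier G \<Longrightarrow> h (oc_eval G w gs) = oc_eval H w (map h gs)"
proof (induction w arbitrary: gs)
  case OVar
  then show ?case by (cases gs) auto
next
  case (OComm u v)
  let ?l = "take (weight u) gs" and ?r = "drop (weight u) gs"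
  have l: "length ?l = weight u" "set ?l \<subseteq> carrier G"
    using OComm.prems by (auto dest: in_set_takeD)
  have r: "length ?r = weight v" "set ?r \<subseteq> carrier G"
    using OComm.prems by (auto dest: in_set_dropD)
  show ?case
    using OComm.IH(1)[OF l] OComm.IH(2)[OF r] oc_eval_closed[OF G.is_group] l r
    by (simp add: hom_comm take_map drop_map)
qed

lemma (in group_hom) hom_law_val:
  assumes "length gs = weight w + 2" "set gs \<subseteq> carrier G"
  shows "h (law_val G w gs) = law_val H w (map h gs)"
proof -
  have tk: "length (take (weight w) gs) = weight w" "set (take (weight w) gs) \<subseteq> carrier G"
    using assms by (auto dest: in_set_takeD)
  have "gs ! weight w \<in> carrier G" "gs ! (weight w + 1) \<in> carrier G"
    using assms by (auto simp: subset_iff)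
  then show ?thesis unfolding law_val_def
    using assms(1) tk oc_eval_closed[OF G.is_group tk]
    by (simp add: hom_comm comm_closed[OF G.is_group] hom_oc_eval take_map)
qed

lemma (in group) inv_mult_cancel_left [simp]:
  "a \<in> carrier G \<Longrightarrow> z \<in> carrier G \<Longrightarrow> inv a \<otimes> (a \<otimes> z) = z"
  by (simp add: m_assoc[symmetric])

lemma (in group) inv_mult_cancel_right [simp]:
  "a \<in> carrier G \<Longrightarrow> z \<in> carrier G \<Longrightarrow> a \<otimes> (inv a \<otimes> z) = z"
  by (simp add: m_assoc[symmetric])

lemma (in group) conj_group_hom: "g \<in> carrier G \<Longrightarrow> group_hom G G (\<lambda>x. g \<otimes> x \<otimes> inv g)"
  by unfold_locales (intro homI, simp_all add: m_assoc)

lemma (in group) comm_eq_one_iff: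
  assumes "a \<in> carrier G" "b \<in> carrier G"
  shows "comm G a b = \<one> \<longleftrightarrow> a \<otimes> b = b \<otimes> a"
proof -
  have "comm G a b = inv (b \<otimes> a) \<otimes> (a \<otimes> b)"
    using assms by (simp add: comm_def inv_mult_group m_assoc)
  then show ?thesis
    using assms by (metis inv_closed inv_inv l_inv m_closed inv_equality)
qed

lemma (in group) comm_one_left [simp]: "b \<in> carrier G \<Longrightarrow> comm G \<one> b = \<one>"
  by (simp add: comm_def)

lemma (in group) comm_one_right [simp]: "a \<in> carrier G \<Longrightarrow> comm G a \<one> = \<one>"
  by (simp add: comm_def m_assoc)

lemma (in group) comm_mult_right:
  assumes "u \<in> carrier G" "a \<in> carrier G" "b \<in> carrier G"
  shows "comm G u (a \<otimes> b) = comm G u b \<otimes> (inv b \<otimes> comm G u a \<otimes> b)"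
  using assms unfolding comm_def by (simp add: m_assoc inv_mult_group)

lemma (in group) comm_mult_left:
  assumes "a \<in> carrier G" "b \<in> carrier G" "x \<in> carrier G"
  shows "comm G (a \<otimes> b) x = inv b \<otimes> comm G a x \<otimes> b \<otimes> comm G b x"
  using assms unfolding comm_def by (simp add: m_assoc inv_mult_group)

text \<open>A verbal subgroup is normal: its generators are closed under conjugation.\<close>

lemma (in group) verbal_normal: "verbal G w \<lhd> G"
  unfolding verbal_def
proof (rule normal_generateI)
  show "{law_val G w gs |gs. length gs = weight w + 2 \<and> set gs \<subseteq> carrier G} \<subseteq> carrier G"
    using law_val_closed[OF is_group] by auto
next
  fix v g
  assume "v \<in> {law_val G w gs |gs. length gs = weight w + 2 \<and> set gs \<subseteq> carrier G}"
    and g: "g \<in> carrier G"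
  then obtain gs where gs: "v = law_val G w gs" "length gs = weight w + 2" "set gs \<subseteq> carrier G"
    by blast
  interpret conj: group_hom G G "\<lambda>x. g \<otimes> x \<otimes> inv g" using conj_group_hom[OF g] .
  have "g \<otimes> v \<otimes> inv g = law_val G w (map (\<lambda>x. g \<otimes> x \<otimes> inv g) gs)"
    using conj.hom_law_val[OF gs(2,3)] gs(1) by simp
  moreover have "set (map (\<lambda>x. g \<otimes> x \<otimes> inv g) gs) \<subseteq> carrier G"
    using gs(3) g by auto
  ultimately show "g \<otimes> v \<otimes> inv g
      \<in> {law_val G w gs |gs. length gs = weight w + 2 \<and> set gs \<subseteq> carrier G}"
    using gs(2) by (metis (mono_tags, lifting) length_map mem_Collect_eq)
qed

text \<open>Exponent bookkeeping for the transfer factors of a cycle-adapted transversal.\<close>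

lemma (in group) int_pow_shift:
  assumes x: "x \<in> carrier G"
  shows "x [^] (a::int) \<otimes> x \<otimes> inv (x [^] (b::int)) = x [^] (a + 1 - b)"
proof -
  have "x [^] (a + 1 - b) = x [^] (a + 1) \<otimes> x [^] (- b)"
    using int_pow_mult[OF x, of "a + 1" "- b"] by simp
  also have "x [^] (a + 1) = x [^] a \<otimes> x"
    using int_pow_mult[OF x, of a 1] x by simp
  finally show ?thesis using x by (simp add: int_pow_neg)
qed

section \<open>The centre of a group and products of central elements\<close>

definition centre :: "('a, 'b) monoid_scheme \<Rightarrow> 'a set" where
  "centre G = {z \<in> carrier G. \<forall>g\<in>carrier G. z \<otimes>\<^bsub>G\<^esub> g = g \<otimes>\<^bsub>G\<^esub> z}"

lemma centre_iff: "z \<in> centre G \<longleftrightarrow> z \<in> carrier G \<and> (\<forall>g\<in>carrier G. z \<otimes>\<^bsub>G\<^esub> g = g \<otimes>\<^bsub>G\<^esub> z)"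
  by (simp add: centre_def)

lemma (in group) centre_subgroup: "subgroup (centre G) G"
proof (rule subgroupI)
  show "centre G \<subseteq> carrier G" "centre G \<noteq> {}"
    by (auto simp: centre_def)
next
  fix a assume "a \<in> centre G"
  then have a: "a \<in> carrier G" "\<And>g. g \<in> carrier G \<Longrightarrow> a \<otimes> g = g \<otimes> a"
    by (auto simp: centre_iff)
  have "inv a \<otimes> g = g \<otimes> inv a" if g: "g \<in> carrier G" for g
  proof -
    have "inv a \<otimes> g = inv a \<otimes> (g \<otimes> a) \<otimes> inv a" using a(1) g by (simp add: m_assoc)
    also have "\<dots> = inv a \<otimes> (a \<otimes> g) \<otimes> inv a" by (simp only: a(2)[OF g])
    also have "\<dots> = g \<otimes> inv a" using a(1) g by (simp add: m_assoc)
    finally show ?thesis .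
  qed
  then show "inv a \<in> centre G" using a(1) by (simp add: centre_iff)
next
  fix a b assume "a \<in> centre G" "b \<in> centre G"
  then have a: "a \<in> carrier G" "\<And>g. g \<in> carrier G \<Longrightarrow> a \<otimes> g = g \<otimes> a"
    and b: "b \<in> carrier G" "\<And>g. g \<in> carrier G \<Longrightarrow> b \<otimes> g = g \<otimes> b"
    by (auto simp: centre_iff)
  have "a \<otimes> b \<otimes> g = g \<otimes> (a \<otimes> b)" if g: "g \<in> carrier G" for g
  proof -
    have "a \<otimes> b \<otimes> g = a \<otimes> (g \<otimes> b)" using a(1) b(1) g by (simp only: m_assoc b(2)[OF g])
    also have "\<dots> = g \<otimes> a \<otimes> b" using a(1) g b(1) by (simp only: m_assoc[symmetric] a(2)[OF g])
    finally show ?thesis using g a(1) b(1) by (simp only: m_assoc)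
  qed
  then show "a \<otimes> b \<in> centre G" using a(1) b(1) by (simp add: centre_iff)
qed

lemma (in group) centre_comm_group: "comm_group (G\<lparr>carrier := centre G\<rparr>)"
proof -
  interpret Z: group "G\<lparr>carrier := centre G\<rparr>"
    using subgroup.subgroup_is_group[OF centre_subgroup is_group] .
  show ?thesis
  proof (rule Z.group_comm_groupI)
    fix x y assume "x \<in> carrier (G\<lparr>carrier := centre G\<rparr>)" "y \<in> carrier (G\<lparr>carrier := centre G\<rparr>)"
    then have "x \<in> centre G" "y \<in> carrier G" using subgroup.subset[OF centre_subgroup] by auto
    then show "x \<otimes>\<^bsub>G\<lparr>carrier := centre G\<rparr>\<^esub> y = y \<otimes>\<^bsub>G\<lparr>carrier := centre G\<rparr>\<^esub> x"
      unfolding centre_iff by simp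
  qed
qed

lemma (in group) centreI:
  assumes "z \<in> carrier G" "\<And>g. g \<in> carrier G \<Longrightarrow> comm G z g = \<one>"
  shows "z \<in> centre G"
  unfolding centre_iff using assms comm_eq_one_iff by blast

lemma (in group) comm_mult_right_central:
  assumes "u \<in> carrier G" "a \<in> carrier G" "b \<in> carrier G" "comm G u a \<in> centre G"
  shows "comm G u (a \<otimes> b) = comm G u a \<otimes> comm G u b"
proof -
  have ua: "comm G u a \<in> carrier G" and ub: "comm G u b \<in> carrier G"
    using assms(1-3) comm_closed[OF is_group] by auto
  have "inv b \<otimes> comm G u a \<otimes> b = comm G u a"
    using assms(3,4) ua by (simp add: centre_iff m_assoc)
  then show ?thesis
    using comm_mult_right[OF assms(1-3)] assms(4) ub by (simp add: centre_iff)
qed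

lemma (in group) list_prod_central:
  assumes "distinct xs" "f ` set xs \<subseteq> centre G"
  shows "list_prod G (map f xs) = finprod (G\<lparr>carrier := centre G\<rparr>) f (set xs)"
  using assms
proof (induction xs)
  case Nil
  interpret Z: comm_group "G\<lparr>carrier := centre G\<rparr>" by (rule centre_comm_group)
  show ?case by (simp add: list_prod_def)
next
  case (Cons a xs)
  interpret Z: comm_group "G\<lparr>carrier := centre G\<rparr>" by (rule centre_comm_group)
  have "f \<in> set xs \<rightarrow> centre G" "f a \<in> centre G" using Cons.prems by auto
  then show ?case
    using Cons by (simp add: list_prod_def)
qed

lemma (in group) list_prod_upt_central:
  assumes "f ` {..<m} \<subseteq> centre G"
  shows "list_prod G (map f [0..<m]) = finprod (G\<lparr>carrier := centre G\<rparr>) f {..<m}"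
  using list_prod_central[of "[0..<m]" f] assms by (simp add: atLeast0LessThan)

lemma (in monoid) list_prod_closed: "set xs \<subseteq> carrier G \<Longrightarrow> list_prod G xs \<in> carrier G"
  by (induction xs) (simp_all add: list_prod_def)

lemma (in group_hom) hom_list_prod:
  "set xs \<subseteq> carrier G \<Longrightarrow> h (list_prod G xs) = list_prod H (map h xs)"
  by (induction xs) (auto simp: list_prod_def list_prod_closed)

lemma (in group) int_pow_list_prod:
  assumes "z \<in> carrier G"
  shows "list_prod G (map (\<lambda>i. z [^] (f i :: int)) xs) = z [^] sum_list (map f xs)"
  by (induction xs) (simp_all add: list_prod_def int_pow_mult[OF assms])

text \<open>Reindexing a finite product along a permutation of the index set, and the
  ``twisted'' cancellation that makes the transfer independent of the transversal.\<close>

lemma (in comm_group) finprod_permute: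
  assumes "bij_betw \<sigma> I I" "g \<in> I \<rightarrow> carrier G"
  shows "finprod G (\<lambda>i. g (\<sigma> i)) I = finprod G g I"
  using finprod_reindex[of g \<sigma> I] assms bij_betw_imp_inj_on bij_betw_imp_surj_on by fastforce

lemma (in comm_group) finprod_twisted:
  assumes "bij_betw \<rho> I I" "bij_betw k I I" "a \<in> I \<rightarrow> carrier G" "g \<in> I \<rightarrow> carrier G"
    and "\<And>i. i \<in> I \<Longrightarrow> f i = a i \<otimes> g (\<rho> i) \<otimes> inv (a (k i))"
  shows "finprod G f I = finprod G g I"
proof -
  have ai: "(\<lambda>i. inv (a i)) \<in> I \<rightarrow> carrier G" using assms(3) by auto
  have \<rho>: "(\<lambda>i. g (\<rho> i)) \<in> I \<rightarrow> carrier G" and k: "(\<lambda>i. inv (a (k i))) \<in> I \<rightarrow> carrier G"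
    using assms(1-4) bij_betwE by fastforce+
  have "finprod G f I = finprod G (\<lambda>i. a i \<otimes> (g (\<rho> i) \<otimes> inv (a (k i)))) I"
    using assms(3,5) \<rho> k by (intro finprod_cong') (auto simp: m_assoc Pi_iff)
  also have "\<dots> = finprod G a I \<otimes> (finprod G (\<lambda>i. g (\<rho> i)) I \<otimes> finprod G (\<lambda>i. inv (a (k i))) I)"
    using assms(3) \<rho> k by (simp add: Pi_iff)
  also have "\<dots> = finprod G a I \<otimes> (finprod G g I \<otimes> finprod G (\<lambda>i. inv (a i)) I)"
    using finprod_permute[OF assms(1,4)] finprod_permute[OF assms(2) ai] by simp
  also have "\<dots> = finprod G g I \<otimes> (finprod G a I \<otimes> finprod G (\<lambda>i. inv (a i)) I)"
    using assms(3,4) ai by (simp only: m_lcomm finprod_closed)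
  also have "finprod G a I \<otimes> finprod G (\<lambda>i. inv (a i)) I = finprod G (\<lambda>i. a i \<otimes> inv (a i)) I"
    by (rule finprod_multf[OF assms(3) ai, symmetric])
  also have "\<dots> = \<one>"
    using assms(3) by (intro finprod_one_eqI) (auto simp: Pi_iff)
  finally show ?thesis using assms(4) by simp
qed

section \<open>The marginal subgroup\<close>

lemma (in group) marginal_law:
  assumes "x \<in> marginal G w" "length gs = weight w + 2" "set gs \<subseteq> carrier G" "i < weight w + 2"
  shows "law_val G w (gs[i := gs ! i \<otimes> x]) = law_val G w gs"
  using assms unfolding marginal_def by blast

lemma (in group) marginal_subgroup: "subgroup (marginal G w) G"
proof (rule subgroupI)
  show "marginal G w \<subseteq> carrier G" by (auto simp: marginal_def)
  have "gs[i := gs ! i \<otimes> \<one>] = gs" if "set gs \<subseteq> carrier G" "i < length gs" for gs :: "'a list" and i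
    using that by (simp add: subset_iff)
  then show "marginal G w \<noteq> {}" unfolding marginal_def by force
next
  fix x assume x: "x \<in> marginal G w"
  then have xC: "x \<in> carrier G" by (simp add: marginal_def)
  have "law_val G w (gs[i := gs ! i \<otimes> inv x]) = law_val G w gs"
    if gs: "length gs = weight w + 2" "set gs \<subseteq> carrier G" and i: "i < weight w + 2" for gs i
  proof -
    let ?gs' = "gs[i := gs ! i \<otimes> inv x]"
    have gi: "gs ! i \<in> carrier G" using gs i by (auto simp: subset_iff)
    have "set ?gs' \<subseteq> carrier G" using gs gi xC by (intro set_update_subsetI) auto
    moreover have "?gs'[i := ?gs' ! i \<otimes> x] = gs" using gs i gi xC by (simp add: m_assoc)
    ultimately show ?thesis using marginal_law[OF x, of ?gs' i] gs i by simp
  qed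
  then show "inv x \<in> marginal G w" using xC by (simp add: marginal_def)
next
  fix x y assume x: "x \<in> marginal G w" and y: "y \<in> marginal G w"
  then have xC: "x \<in> carrier G" and yC: "y \<in> carrier G" by (simp_all add: marginal_def)
  have "law_val G w (gs[i := gs ! i \<otimes> (x \<otimes> y)]) = law_val G w gs"
    if gs: "length gs = weight w + 2" "set gs \<subseteq> carrier G" and i: "i < weight w + 2" for gs i
  proof -
    let ?gs' = "gs[i := gs ! i \<otimes> x]"
    have gi: "gs ! i \<in> carrier G" using gs i by (auto simp: subset_iff)
    have "set ?gs' \<subseteq> carrier G" using gs gi xC by (intro set_update_subsetI) auto
    moreover have "?gs'[i := ?gs' ! i \<otimes> y] = gs[i := gs ! i \<otimes> (x \<otimes> y)]"
      using gs i gi xC yC by (simp add: m_assoc)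
    ultimately show ?thesis
      using marginal_law[OF y, of ?gs' i] marginal_law[OF x, of gs i] gs i by simp
  qed
  then show "x \<otimes> y \<in> marginal G w" using xC yC by (simp add: marginal_def)
qed

lemma law_val_append:
  "length gs = weight w \<Longrightarrow> law_val G w (gs @ [a, b]) = comm G (comm G (oc_eval G w gs) a) b"
  by (simp add: law_val_def nth_append)

context group
begin

context
  fixes gs :: "'a list" and w :: ocword
  assumes gs_length: "length gs = weight w" and gs_carrier: "set gs \<subseteq> carrier G"
begin

lemma word_value_closed: "oc_eval G w gs \<in> carrier G"
  using oc_eval_closed[OF is_group gs_length gs_carrier] .

text \<open>For a marginal element \<open>x\<close> and a word value \<open>W\<close>, the law \<open>[W, x\<^sub>r\<^sub>+\<^sub>1, x\<^sub>r\<^sub>+\<^sub>2]\<close>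
  evaluated at \<open>(1, g)\<close> and \<open>(g, 1)\<close> shows that \<open>[W, x]\<close> is central and \<open>[W, g]\<close>
  commutes with \<open>x\<close>.\<close>

lemma marginal_comm_comm:
  assumes x: "x \<in> marginal G w" and g: "g \<in> carrier G"
  shows "comm G (comm G (oc_eval G w gs) x) g = \<one>"
    and "comm G (comm G (oc_eval G w gs) g) x = \<one>"
proof -
  have xC: "x \<in> carrier G" using x by (simp add: marginal_def)
  have "law_val G w ((gs @ [\<one>, g])[weight w := (gs @ [\<one>, g]) ! weight w \<otimes> x]) = law_val G w (gs @ [\<one>, g])"
    using gs_length gs_carrier g by (intro marginal_law[OF x]) auto
  then show "comm G (comm G (oc_eval G w gs) x) g = \<one>"
    using gs_length xC g word_value_closed
    by (simp add: list_update_append nth_append law_val_append)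
  have "law_val G w ((gs @ [g, \<one>])[weight w + 1 := (gs @ [g, \<one>]) ! (weight w + 1) \<otimes> x]) = law_val G w (gs @ [g, \<one>])"
    using gs_length gs_carrier g by (intro marginal_law[OF x]) auto
  then show "comm G (comm G (oc_eval G w gs) g) x = \<one>"
    using gs_length xC g word_value_closed comm_closed[OF is_group]
    by (simp add: list_update_append nth_append law_val_append)
qed

lemma marginal_comm_central: "x \<in> marginal G w \<Longrightarrow> comm G (oc_eval G w gs) x \<in> centre G"
  using marginal_comm_comm(1) comm_closed[OF is_group word_value_closed]
  by (intro centreI) (auto simp: marginal_def)

lemma marginal_comm_mult:
  assumes x: "x \<in> marginal G w" and g: "g \<in> carrier G"
  shows "comm G (oc_eval G w gs) (g \<otimes> x) = comm G (oc_eval G w gs) g \<otimes> comm G (oc_eval G w gs) x"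
proof -
  let ?W = "oc_eval G w gs"
  have xC: "x \<in> carrier G" using x by (simp add: marginal_def)
  have Wg: "comm G ?W g \<in> carrier G" using comm_closed[OF is_group word_value_closed g] .
  have "comm G ?W g \<otimes> x = x \<otimes> comm G ?W g"
    using marginal_comm_comm(2)[OF x g] comm_eq_one_iff[OF Wg xC] by simp
  then have "inv x \<otimes> comm G ?W g \<otimes> x = comm G ?W g"
    using xC Wg by (simp add: m_assoc)
  then show ?thesis
    using comm_mult_right[OF word_value_closed g xC] marginal_comm_central[OF x] Wg
    by (simp add: centre_iff)
qed

lemma marginal_comm_hom: "group_hom (G\<lparr>carrier := marginal G w\<rparr>) G (comm G (oc_eval G w gs))"
proof -
  have "group (G\<lparr>carrier := marginal G w\<rparr>)"
    using subgroup.subgroup_is_group[OF marginal_subgroup is_group] .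
  moreover have "comm G (oc_eval G w gs) \<in> hom (G\<lparr>carrier := marginal G w\<rparr>) G"
    using marginal_comm_mult comm_closed[OF is_group word_value_closed] marginal_subgroup
    by (intro homI) (auto simp: marginal_def)
  ultimately show ?thesis
    by (simp add: group_hom_def group_hom_axioms_def)
qed

lemma marginal_comm_conj:
  assumes x: "x \<in> marginal G w" and h: "h \<in> carrier G"
  shows "comm G (oc_eval G w gs) (h \<otimes> x \<otimes> inv h) = comm G (oc_eval G w gs) x"
proof -
  let ?W = "oc_eval G w gs" and ?c = "comm G (oc_eval G w gs) (h \<otimes> x \<otimes> inv h)"
  let ?z = "comm G ?W x" and ?d = "comm G ?W h"
  have xC: "x \<in> carrier G" using x by (simp add: marginal_def)
  have W: "?W \<in> carrier G" by (rule word_value_closed)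
  have d: "?d \<in> carrier G" and z: "?z \<in> carrier G" using comm_closed[OF is_group W] h xC by auto
  interpret conj: group_hom G G "\<lambda>y. inv h \<otimes> y \<otimes> h"
    using conj_group_hom[OF inv_closed[OF h]] h by simp
  have "inv h \<otimes> ?c \<otimes> h = comm G (inv h \<otimes> ?W \<otimes> h) x"
    using conj.hom_comm[of ?W "h \<otimes> x \<otimes> inv h"] W h xC by (simp add: m_assoc)
  also have "inv h \<otimes> ?W \<otimes> h = ?W \<otimes> ?d"
    using W h by (simp add: comm_def m_assoc)
  also have "comm G (?W \<otimes> ?d) x = inv ?d \<otimes> ?z \<otimes> ?d"
    using comm_mult_left[OF W d xC] marginal_comm_comm(2)[OF x h] d z by simp
  also have "\<dots> = ?z"
    using marginal_comm_central[OF x] d z by (simp add: centre_iff m_assoc)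
  finally have conj_c: "inv h \<otimes> ?c \<otimes> h = ?z" .
  have "?c \<in> carrier G" using comm_closed[OF is_group W] h xC by simp
  then have "?c = h \<otimes> (inv h \<otimes> ?c \<otimes> h) \<otimes> inv h" using h by (simp add: m_assoc)
  also have "\<dots> = h \<otimes> ?z \<otimes> inv h" by (simp only: conj_c)
  also have "\<dots> = ?z" using marginal_comm_central[OF x] h z by (simp add: centre_iff m_assoc)
  finally show ?thesis .
qed

lemma marginal_comm_conj_pow:
  assumes x: "x \<in> marginal G w" and h: "h \<in> carrier G"
  shows "comm G (oc_eval G w gs) (h \<otimes> x [^] (e::int) \<otimes> inv h) = comm G (oc_eval G w gs) x [^] e"
proof -
  interpret M: group_hom "G\<lparr>carrier := marginal G w\<rparr>" G "comm G (oc_eval G w gs)"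
    by (rule marginal_comm_hom)
  have "x [^] e \<in> marginal G w"
    using subgroup_int_pow_closed[OF marginal_subgroup x] .
  then show ?thesis
    using marginal_comm_conj h M.hom_int_pow[of x e] x int_pow_consistent[OF marginal_subgroup x]
    by simp
qed

end

end

section \<open>Right transversals and the transfer\<close>

text \<open>A group \<open>G\<close> with a subgroup \<open>B\<close>; transversals are indexed by \<open>{..<n}\<close>.\<close>

locale transversal_setting = group G for G :: "('a, 'b) monoid_scheme" (structure) +
  fixes B :: "'a set"
  assumes B_subgroup: "subgroup B G"
begin

lemma B_carrier: "B \<subseteq> carrier G"
  using subgroup.subset[OF B_subgroup] .

lemma rcoset_mult: "g \<in> carrier G \<Longrightarrow> x \<in> carrier G \<Longrightarrow> B #> (g \<otimes> x) = (B #> g) #> x"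
  by (simp add: coset_mult_assoc B_carrier)

lemma rcoset_mult_cancel:
  assumes "g \<in> carrier G" "h \<in> carrier G" "x \<in> carrier G"
  shows "B #> (g \<otimes> x) = B #> (h \<otimes> x) \<longleftrightarrow> B #> g = B #> h"
proof
  assume "B #> (g \<otimes> x) = B #> (h \<otimes> x)"
  then have "(B #> (g \<otimes> x)) #> inv x = (B #> (h \<otimes> x)) #> inv x" by simp
  then show "B #> g = B #> h" using assms by (simp add: coset_mult_assoc B_carrier m_assoc)
qed (use assms in \<open>simp add: rcoset_mult\<close>)

lemma rcoset_eq_imp_mem:
  assumes "g \<in> carrier G" "h \<in> carrier G" "B #> g = B #> h"
  shows "g \<otimes> inv h \<in> B"
  using subgroup.rcos_module_imp[OF B_subgroup is_group assms(2)] rcos_self[OF assms(1) B_subgroup] assms(3)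
  by simp

definition coset_index :: "nat \<Rightarrow> (nat \<Rightarrow> 'a) \<Rightarrow> 'a \<Rightarrow> nat" where
  "coset_index n t g = (THE j. j < n \<and> B #> g = B #> t j)"

lemma trep_coset_index: "trep G B n t g = t (coset_index n t g)"
  by (simp add: trep_def coset_index_def)

lemma coset_index_cong: "B #> g = B #> h \<Longrightarrow> coset_index n t g = coset_index n t h"
  by (simp add: coset_index_def)

definition transfer_factor :: "nat \<Rightarrow> (nat \<Rightarrow> 'a) \<Rightarrow> 'a \<Rightarrow> nat \<Rightarrow> 'a" where
  "transfer_factor n t x i = t i \<otimes> x \<otimes> inv (trep G B n t (t i \<otimes> x))"

definition transfer :: "('c, 'd) monoid_scheme \<Rightarrow> ('a \<Rightarrow> 'c) \<Rightarrow> nat \<Rightarrow> (nat \<Rightarrow> 'a) \<Rightarrow> 'a \<Rightarrow> 'c" where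
  "transfer A f n t x = finprod A (\<lambda>i. f (transfer_factor n t x i)) {..<n}"

context
  fixes n :: nat and t :: "nat \<Rightarrow> 'a"
  assumes transversal: "right_transversal G B n t"
begin

lemma transversal_carrier: "i < n \<Longrightarrow> t i \<in> carrier G"
  using transversal by (simp add: right_transversal_def)

lemma transversal_coset_inj: "i < n \<Longrightarrow> j < n \<Longrightarrow> B #> t i = B #> t j \<Longrightarrow> i = j"
  using transversal unfolding right_transversal_def bij_betw_def inj_on_def by blast

lemma coset_index:
  assumes g: "g \<in> carrier G"
  shows "coset_index n t g < n \<and> B #> g = B #> t (coset_index n t g)"
proof -
  have "B #> g \<in> (\<lambda>i. B #> t i) ` {..<n}"
    using rcosetsI[OF B_carrier g] transversal unfolding right_transversal_def bij_betw_def by simp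
  then obtain j where j: "j < n" "B #> g = B #> t j" by auto
  have "\<exists>!j. j < n \<and> B #> g = B #> t j"
    using j transversal_coset_inj by metis
  then show ?thesis unfolding coset_index_def by (rule theI')
qed

lemma coset_index_less: "g \<in> carrier G \<Longrightarrow> coset_index n t g < n"
  using coset_index by blast

lemma coset_index_coset: "g \<in> carrier G \<Longrightarrow> B #> t (coset_index n t g) = B #> g"
  using coset_index by simp

lemma coset_index_bij:
  assumes "\<And>i. i < n \<Longrightarrow> u i \<in> carrier G" "inj_on (\<lambda>i. B #> u i) {..<n}"
  shows "bij_betw (\<lambda>i. coset_index n t (u i)) {..<n} {..<n}"
proof -
  have into: "(\<lambda>i. coset_index n t (u i)) ` {..<n} \<subseteq> {..<n}"
    using assms(1) coset_index_less by auto
  have "inj_on (\<lambda>i. coset_index n t (u i)) {..<n}"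
    using assms coset_index_coset unfolding inj_on_def by (metis lessThan_iff)
  then show ?thesis using endo_inj_surj[OF _ into] by (simp add: bij_betw_def)
qed

lemma coset_perm_bij:
  assumes x: "x \<in> carrier G"
  shows "bij_betw (\<lambda>i. coset_index n t (t i \<otimes> x)) {..<n} {..<n}"
proof (rule coset_index_bij)
  show "inj_on (\<lambda>i. B #> (t i \<otimes> x)) {..<n}"
    using x transversal_carrier transversal_coset_inj rcoset_mult_cancel
    unfolding inj_on_def by (metis lessThan_iff)
qed (use x transversal_carrier in simp)

lemma transfer_factor_in_B:
  assumes x: "x \<in> carrier G" and i: "i < n"
  shows "transfer_factor n t x i \<in> B"
proof -
  have "t i \<otimes> x \<in> carrier G" using transversal_carrier[OF i] x by simp
  then show ?thesis
    unfolding transfer_factor_def trep_coset_index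
    using rcoset_eq_imp_mem coset_index coset_index_less transversal_carrier by metis
qed

lemma transfer_factor_mult:
  assumes x: "x \<in> carrier G" and y: "y \<in> carrier G" and i: "i < n"
  shows "transfer_factor n t (x \<otimes> y) i
       = transfer_factor n t x i \<otimes> transfer_factor n t y (coset_index n t (t i \<otimes> x))"
proof -
  let ?k = "coset_index n t (t i \<otimes> x)"
  have ti: "t i \<in> carrier G" using transversal_carrier[OF i] .
  have tk: "t ?k \<in> carrier G" using transversal_carrier coset_index_less ti x by simp
  have "B #> (t i \<otimes> (x \<otimes> y)) = B #> (t ?k \<otimes> y)"
    using ti tk x y by (simp add: rcoset_mult coset_index_coset flip: m_assoc)
  then have "coset_index n t (t i \<otimes> (x \<otimes> y)) = coset_index n t (t ?k \<otimes> y)"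
    by (rule coset_index_cong)
  moreover have "t (coset_index n t (t ?k \<otimes> y)) \<in> carrier G"
    using transversal_carrier coset_index_less tk y by simp
  ultimately show ?thesis
    unfolding transfer_factor_def trep_coset_index using ti tk x y by (simp add: m_assoc)
qed

lemma transfer_hom:
  assumes A: "comm_group A" and f: "f \<in> hom (G\<lparr>carrier := B\<rparr>) A"
  shows "transfer A f n t \<in> hom G A"
proof -
  interpret A: comm_group A by (rule A)
  have fB: "\<And>b. b \<in> B \<Longrightarrow> f b \<in> carrier A"
    using hom_in_carrier[OF f] by simp
  have fmult: "\<And>a b. a \<in> B \<Longrightarrow> b \<in> B \<Longrightarrow> f (a \<otimes> b) = f a \<otimes>\<^bsub>A\<^esub> f b"
    using hom_mult[OF f] by simp
  have F: "(\<lambda>i. f (transfer_factor n t x i)) \<in> {..<n} \<rightarrow> carrier A" if "x \<in> carrier G" for x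
    using fB transfer_factor_in_B that by simp
  show ?thesis
  proof (rule homI)
    fix x assume "x \<in> carrier G"
    then show "transfer A f n t x \<in> carrier A"
      unfolding transfer_def using F by simp
  next
    fix x y assume x: "x \<in> carrier G" and y: "y \<in> carrier G"
    let ?\<sigma> = "\<lambda>i. coset_index n t (t i \<otimes> x)"
    have \<sigma>: "bij_betw ?\<sigma> {..<n} {..<n}" by (rule coset_perm_bij[OF x])
    have "transfer A f n t (x \<otimes> y)
        = finprod A (\<lambda>i. f (transfer_factor n t x i) \<otimes>\<^bsub>A\<^esub> f (transfer_factor n t y (?\<sigma> i))) {..<n}"
      unfolding transfer_def using x y bij_betwE[OF \<sigma>]
      by (intro A.finprod_cong') (auto simp: transfer_factor_mult fmult transfer_factor_in_B fB)
    also have "\<dots> = transfer A f n t x \<otimes>\<^bsub>A\<^esub> transfer A f n t y"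
      unfolding transfer_def
      using F[OF x] F[OF y] bij_betwE[OF \<sigma>] A.finprod_permute[OF \<sigma> F[OF y]]
      by (subst A.finprod_multf) auto
    finally show "transfer A f n t (x \<otimes> y) = transfer A f n t x \<otimes>\<^bsub>A\<^esub> transfer A f n t y" .
  qed
qed

end

lemma transfer_factor_change:
  assumes rt: "right_transversal G B n t" and rt': "right_transversal G B n t'"
    and x: "x \<in> carrier G" and i: "i < n"
  defines "a \<equiv> \<lambda>j. t' j \<otimes> inv (t (coset_index n t (t' j)))"
  shows "transfer_factor n t' x i
       = a i \<otimes> transfer_factor n t x (coset_index n t (t' i)) \<otimes> inv (a (coset_index n t' (t' i \<otimes> x)))"
proof -
  let ?k = "coset_index n t' (t' i \<otimes> x)" and ?p = "coset_index n t (t' i)"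
  let ?q = "coset_index n t (t (?p) \<otimes> x)"
  have t'i: "t' i \<in> carrier G" using transversal_carrier[OF rt' i] .
  have t'k: "t' ?k \<in> carrier G"
    using transversal_carrier[OF rt'] coset_index_less[OF rt'] t'i x by simp
  have tp: "t ?p \<in> carrier G"
    using transversal_carrier[OF rt] coset_index_less[OF rt] t'i by simp
  have tq: "t ?q \<in> carrier G"
    using transversal_carrier[OF rt] coset_index_less[OF rt] tp x by simp
  have "B #> t' ?k = B #> (t ?p \<otimes> x)"
    using t'i x tp by (simp add: coset_index_coset[OF rt'] coset_index_coset[OF rt] rcoset_mult)
  then have "coset_index n t (t' ?k) = ?q" by (rule coset_index_cong)
  then show ?thesis
    unfolding transfer_factor_def trep_coset_index a_def
    using t'i t'k x tp tq by (simp add: m_assoc inv_mult_group)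
qed

lemma transfer_indep:
  assumes rt: "right_transversal G B n t" and rt': "right_transversal G B n t'"
    and A: "comm_group A" and f: "f \<in> hom (G\<lparr>carrier := B\<rparr>) A" and x: "x \<in> carrier G"
  shows "transfer A f n t' x = transfer A f n t x"
proof -
  interpret A: comm_group A by (rule A)
  interpret f: group_hom "G\<lparr>carrier := B\<rparr>" A f
    using subgroup.subgroup_is_group[OF B_subgroup is_group] A.is_group f
    by (simp add: group_hom_def group_hom_axioms_def)
  define \<rho> where "\<rho> j = coset_index n t (t' j)" for j
  define a where "a j = t' j \<otimes> inv (t (\<rho> j))" for j
  define k where "k j = coset_index n t' (t' j \<otimes> x)" for j
  have \<rho>: "bij_betw \<rho> {..<n} {..<n}"
    unfolding \<rho>_def using transversal_carrier[OF rt'] transversal_coset_inj[OF rt']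
    by (intro coset_index_bij[OF rt]) (auto simp: inj_on_def)
  have k: "bij_betw k {..<n} {..<n}"
    unfolding k_def using coset_perm_bij[OF rt' x] .
  have aB: "a j \<in> B" if "j < n" for j
    unfolding a_def \<rho>_def using that transversal_carrier[OF rt'] transversal_carrier[OF rt]
      coset_index_less[OF rt] coset_index_coset[OF rt] rcoset_eq_imp_mem by metis
  have fB: "\<And>b. b \<in> B \<Longrightarrow> f b \<in> carrier A"
    using f.hom_closed by simp
  have fmult: "\<And>b c. b \<in> B \<Longrightarrow> c \<in> B \<Longrightarrow> f (b \<otimes> c) = f b \<otimes>\<^bsub>A\<^esub> f c"
    using f.hom_mult by simp
  have finv: "\<And>b. b \<in> B \<Longrightarrow> f (inv b) = inv\<^bsub>A\<^esub> (f b)"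
    using f.hom_inv m_inv_consistent[OF B_subgroup] by simp
  have factor: "f (transfer_factor n t' x j)
      = f (a j) \<otimes>\<^bsub>A\<^esub> f (transfer_factor n t x (\<rho> j)) \<otimes>\<^bsub>A\<^esub> inv\<^bsub>A\<^esub> (f (a (k j)))" if j: "j < n" for j
  proof -
    have "\<rho> j < n" "k j < n" using j bij_betwE[OF \<rho>] bij_betwE[OF k] by auto
    then have "a j \<in> B" "transfer_factor n t x (\<rho> j) \<in> B" "a (k j) \<in> B" "inv (a (k j)) \<in> B"
      using aB j transfer_factor_in_B[OF rt x] subgroup.m_inv_closed[OF B_subgroup] by auto
    then show ?thesis
      using transfer_factor_change[OF rt rt' x j] subgroup.m_closed[OF B_subgroup]
      unfolding \<rho>_def[symmetric] a_def[symmetric] k_def[symmetric]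
      by (simp add: fmult finv)
  qed
  show ?thesis
    unfolding transfer_def
    using aB fB transfer_factor_in_B[OF rt x] factor
    by (intro A.finprod_twisted[OF \<rho> k]) auto
qed

lemma transversal_same_cosets:
  assumes rt: "right_transversal G B n t"
    and t': "\<And>i. i < n \<Longrightarrow> t' i \<in> carrier G" "\<And>i. i < n \<Longrightarrow> B #> t' i = B #> t i"
  shows "right_transversal G B n t'" and "coset_index n t' g = coset_index n t g"
proof -
  show "right_transversal G B n t'"
    using rt t' bij_betw_cong[of "{..<n}" "\<lambda>i. B #> t' i" "\<lambda>i. B #> t i"]
    unfolding right_transversal_def by simp
  have "(j < n \<and> B #> g = B #> t' j) \<longleftrightarrow> (j < n \<and> B #> g = B #> t j)" for j
    using t'(2) by auto
  then show "coset_index n t' g = coset_index n t g"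
    unfolding coset_index_def by simp
qed

lemma rcoset_power_shift:
  assumes g: "g \<in> carrier G" and h: "h \<in> carrier G" and x: "x \<in> carrier G"
  shows "(\<exists>e::int. B #> (g \<otimes> x [^] e) = B #> (h \<otimes> x)) \<longleftrightarrow> (\<exists>e::int. B #> (g \<otimes> x [^] e) = B #> h)"
proof -
  have "B #> (g \<otimes> x [^] (e + 1)) = B #> (h \<otimes> x) \<longleftrightarrow> B #> (g \<otimes> x [^] e) = B #> h" for e :: int
  proof -
    have "g \<otimes> x [^] (e + 1) = g \<otimes> x [^] e \<otimes> x"
      using g x by (simp add: int_pow_mult m_assoc)
    then show ?thesis using g h x by (simp add: rcoset_mult_cancel)
  qed
  then show ?thesis by (metis diff_add_cancel)
qed

text \<open>Choice of a representative \<open>t\<^sub>r\<^sub>(\<^sub>i\<^sub>)\<close> in each orbit of \<open>\<langle>x\<rangle>\<close> on the cosets, together with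
  exponents \<open>d\<^sub>i\<close> such that \<open>B t\<^sub>r\<^sub>(\<^sub>i\<^sub>) x\<^sup>d\<^sup>\<^sub>i = B t\<^sub>i\<close>.\<close>

lemma orbit_representatives:
  assumes rt: "right_transversal G B n t" and x: "x \<in> carrier G"
  obtains r :: "nat \<Rightarrow> nat" and d :: "nat \<Rightarrow> int" where
    "\<And>i. i < n \<Longrightarrow> r i < n"
    "\<And>i. i < n \<Longrightarrow> B #> (t (r i) \<otimes> x [^] d i) = B #> t i"
    "\<And>i. i < n \<Longrightarrow> r (coset_index n t (t i \<otimes> x)) = r i"
proof -
  define R where "R i j \<longleftrightarrow> j < n \<and> (\<exists>e::int. B #> (t j \<otimes> x [^] e) = B #> t i)" for i j
  define r where "r i = (LEAST j. R i j)" for i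
  define d where "d i = (SOME e::int. B #> (t (r i) \<otimes> x [^] e) = B #> t i)" for i
  have tC: "\<And>i. i < n \<Longrightarrow> t i \<in> carrier G" using transversal_carrier[OF rt] .
  have Rrefl: "R i i" if "i < n" for i
    unfolding R_def using that tC by (intro conjI exI[of _ 0]) simp_all
  have Rr: "R i (r i)" if "i < n" for i
    unfolding r_def using Rrefl[OF that] by (rule LeastI)
  have r: "r i < n" if "i < n" for i
    using Rr[OF that] by (simp add: R_def)
  have d: "B #> (t (r i) \<otimes> x [^] d i) = B #> t i" if i: "i < n" for i
  proof -
    obtain e :: int where "B #> (t (r i) \<otimes> x [^] e) = B #> t i"
      using Rr[OF i] unfolding R_def by blast
    then show ?thesis unfolding d_def by (rule someI)
  qed
  have r_shift: "r (coset_index n t (t i \<otimes> x)) = r i" if i: "i < n" for i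
  proof -
    have "B #> t (coset_index n t (t i \<otimes> x)) = B #> (t i \<otimes> x)"
      using coset_index_coset[OF rt] tC[OF i] x by simp
    then have "R (coset_index n t (t i \<otimes> x)) j \<longleftrightarrow> R i j" for j
      using rcoset_power_shift[OF _ tC[OF i] x, of "t j"] tC[of j] by (cases "j < n") (simp_all add: R_def)
    then have "R (coset_index n t (t i \<otimes> x)) = R i" by (intro ext)
    then show ?thesis by (simp only: r_def)
  qed
  show ?thesis using that r d r_shift by blast
qed

text \<open>For a fixed \<open>x\<close> there is a transversal all of whose transfer factors are conjugates of
  powers of \<open>x\<close>, with exponents summing to the index \<open>n\<close>: on each orbit the transversal runs
  through \<open>t\<^sub>r, t\<^sub>r x, t\<^sub>r x\<^sup>2, \<dots>\<close>.\<close>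

lemma cycle_adapted_transversal:
  assumes rt: "right_transversal G B n t" and x: "x \<in> carrier G"
  obtains t' h :: "nat \<Rightarrow> 'a" and e :: "nat \<Rightarrow> int" where
    "right_transversal G B n t'"
    "\<And>i. i < n \<Longrightarrow> h i \<in> carrier G"
    "\<And>i. i < n \<Longrightarrow> transfer_factor n t' x i = h i \<otimes> x [^] e i \<otimes> inv (h i)"
    "(\<Sum>i<n. e i) = int n"
proof -
  obtain r :: "nat \<Rightarrow> nat" and d :: "nat \<Rightarrow> int" where r: "\<And>i. i < n \<Longrightarrow> r i < n"
    and d: "\<And>i. i < n \<Longrightarrow> B #> (t (r i) \<otimes> x [^] d i) = B #> t i"
    and r\<sigma>: "\<And>i. i < n \<Longrightarrow> r (coset_index n t (t i \<otimes> x)) = r i"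
    by (rule orbit_representatives[OF rt x]) blast
  define \<sigma> where "\<sigma> i = coset_index n t (t i \<otimes> x)" for i
  define t' where "t' i = t (r i) \<otimes> x [^] d i" for i
  define e where "e i = d i + 1 - d (\<sigma> i)" for i
  have tC: "\<And>i. i < n \<Longrightarrow> t i \<in> carrier G" using transversal_carrier[OF rt] .
  have t'C: "\<And>i. i < n \<Longrightarrow> t' i \<in> carrier G" unfolding t'_def using tC r x by simp
  have t'B: "\<And>i. i < n \<Longrightarrow> B #> t' i = B #> t i" unfolding t'_def using d .
  note same = transversal_same_cosets[OF rt t'C t'B]
  have \<sigma>: "bij_betw \<sigma> {..<n} {..<n}" unfolding \<sigma>_def using coset_perm_bij[OF rt x] .
  have \<sigma>': "coset_index n t' (t' i \<otimes> x) = \<sigma> i" if i: "i < n" for i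
  proof -
    have "B #> (t' i \<otimes> x) = B #> (t i \<otimes> x)"
      using t'C[OF i] tC[OF i] t'B[OF i] x by (simp add: rcoset_mult)
    then have "coset_index n t (t' i \<otimes> x) = coset_index n t (t i \<otimes> x)"
      by (rule coset_index_cong)
    then show ?thesis by (simp add: same(2) \<sigma>_def)
  qed
  have factor: "transfer_factor n t' x i = t (r i) \<otimes> x [^] e i \<otimes> inv (t (r i))" if i: "i < n" for i
  proof -
    have "\<sigma> i < n" using bij_betwE[OF \<sigma>] i by auto
    then have "transfer_factor n t' x i = t (r i) \<otimes> (x [^] d i \<otimes> x \<otimes> inv (x [^] d (\<sigma> i))) \<otimes> inv (t (r i))"
      unfolding transfer_factor_def trep_coset_index \<sigma>'[OF i]
      using tC r i x r\<sigma>[OF i] by (simp add: t'_def \<sigma>_def m_assoc inv_mult_group)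
    then show ?thesis using x by (simp add: e_def int_pow_shift)
  qed
  have sum: "(\<Sum>i<n. e i) = int n"
    using sum.reindex_bij_betw[OF \<sigma>, of d] by (simp add: e_def sum.distrib sum_subtractf)
  have h: "t (r i) \<in> carrier G" if "i < n" for i using tC r that by blast
  show ?thesis by (rule that[OF same(1) h factor sum])
qed

end

section \<open>The quotient \<open>B/V(B)\<close> and the map \<open>\<tau>\<close>\<close>

locale verbal_quotient = transversal_setting +
  fixes w :: ocword and ys :: "'a list"
  assumes ys_length: "length ys = weight w" and ys_in_B: "set ys \<subseteq> B"
begin

abbreviation (input) "H \<equiv> G\<lparr>carrier := B\<rparr>"
abbreviation (input) "Q \<equiv> BmodV G B w"
abbreviation (input) "Z \<equiv> Q\<lparr>carrier := centre Q\<rparr>"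
abbreviation (input) "proj \<equiv> natpi G B w"
abbreviation (input) "W \<equiv> oc_eval G w ys"

lemma H_group: "group H"
  using subgroup.subgroup_is_group[OF B_subgroup is_group] .

lemma inclusion_hom: "group_hom H G (\<lambda>b. b)"
  using H_group is_group B_carrier by (auto simp: group_hom_def group_hom_axioms_def hom_def)

lemma ys_carrier: "set ys \<subseteq> carrier G"
  using ys_in_B B_carrier by blast

lemma word_value_in_B: "W \<in> B"
  using oc_eval_closed[OF H_group ys_length] ys_in_B
    group_hom.hom_oc_eval[OF inclusion_hom ys_length] by simp

lemma comm_in_B: "a \<in> B \<Longrightarrow> b \<in> B \<Longrightarrow> comm G a b \<in> B"
  using comm_closed[OF H_group, of a b] group_hom.hom_comm[OF inclusion_hom, of a b] by simp

lemma Q_group: "group Q"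
  unfolding BmodV_def using normal.factorgroup_is_group[OF group.verbal_normal[OF H_group]] .

lemma proj_hom: "group_hom H Q proj"
proof -
  have "proj = (\<lambda>b. verbal H w #>\<^bsub>H\<^esub> b)"
    by (rule ext) (simp add: natpi_def r_coset_def)
  then have "proj \<in> hom H Q"
    unfolding BmodV_def using normal.r_coset_hom_Mod[OF group.verbal_normal[OF H_group]] by simp
  then show ?thesis using H_group Q_group by (simp add: group_hom_def group_hom_axioms_def)
qed

lemma Q_carrier: "carrier Q = proj ` B"
  unfolding BmodV_def carrier_FactGroup by (auto simp: natpi_def r_coset_def)

lemma proj_list_prod: "set bs \<subseteq> B \<Longrightarrow> list_prod Q (map proj bs) = proj (list_prod G bs)"
  using group_hom.hom_list_prod[OF proj_hom, of bs] by (simp add: list_prod_def)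

lemma list_prod_in_B: "set bs \<subseteq> B \<Longrightarrow> list_prod G bs \<in> B"
  using monoid.list_prod_closed[OF group.is_monoid[OF H_group], of bs] by (simp add: list_prod_def)

lemma law_vanishes:
  assumes "length bs = weight w + 2" "set bs \<subseteq> B"
  shows "law_val Q w (map proj bs) = \<one>\<^bsub>Q\<^esub>"
proof -
  interpret V: subgroup "verbal H w" H
    using normal_imp_subgroup[OF group.verbal_normal[OF H_group]] .
  have "law_val H w bs \<in> verbal H w"
    unfolding verbal_def using assms by (intro generate.incl) auto
  then have "proj (law_val H w bs) = \<one>\<^bsub>Q\<^esub>"
    using V.rcos_const[OF H_group] by (simp add: natpi_def BmodV_def r_coset_def)
  then show ?thesis using group_hom.hom_law_val[OF proj_hom] assms by simp
qed

definition wcomm :: "'a \<Rightarrow> 'a set" where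
  "wcomm b = comm Q (oc_eval Q w (map proj ys)) (proj b)"

lemma tau_eq: "tau G B w ys n t x = list_prod Q (map (\<lambda>i. wcomm (transfer_factor n t x i)) [0..<n])"
  by (simp add: tau_def wcomm_def transfer_factor_def)

lemma wcomm_proj: "b \<in> B \<Longrightarrow> wcomm b = proj (comm G W b)"
  unfolding wcomm_def
  using group_hom.hom_oc_eval[OF proj_hom ys_length] group_hom.hom_comm[OF proj_hom]
    group_hom.hom_comm[OF inclusion_hom] word_value_in_B ys_in_B
    group_hom.hom_oc_eval[OF inclusion_hom ys_length] by simp

lemma wcomm_central:
  assumes b: "b \<in> B"
  shows "wcomm b \<in> centre Q"
proof (rule group.centreI[OF Q_group])
  show "wcomm b \<in> carrier Q"
    using b wcomm_proj comm_in_B word_value_in_B group_hom.hom_closed[OF proj_hom] by simp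
  fix q assume "q \<in> carrier Q"
  then obtain c where c: "c \<in> B" "q = proj c" using Q_carrier by auto
  then have "law_val Q w (map proj (ys @ [b, c])) = \<one>\<^bsub>Q\<^esub>"
    using b ys_length ys_in_B by (intro law_vanishes) auto
  then show "comm Q (wcomm b) q = \<one>\<^bsub>Q\<^esub>"
    using c ys_length by (simp add: law_val_def wcomm_def nth_append)
qed

lemma wcomm_hom: "wcomm \<in> hom H Z"
proof (rule homI)
  fix a b assume "a \<in> carrier H" "b \<in> carrier H"
  then have a: "a \<in> B" and b: "b \<in> B" by simp_all
  interpret Q: group Q by (rule Q_group)
  have "oc_eval Q w (map proj ys) \<in> carrier Q"
    using ys_length ys_in_B group_hom.hom_closed[OF proj_hom]
    by (intro oc_eval_closed[OF Q_group]) auto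
  then show "wcomm (a \<otimes>\<^bsub>H\<^esub> b) = wcomm a \<otimes>\<^bsub>Z\<^esub> wcomm b"
    using Q.comm_mult_right_central wcomm_central[OF a] a b group_hom.hom_closed[OF proj_hom]
      group_hom.hom_mult[OF proj_hom]
    by (simp add: wcomm_def)
qed (simp add: wcomm_central)

lemma tau_eq_transfer:
  assumes "right_transversal G B n t" "x \<in> carrier G"
  shows "tau G B w ys n t x = transfer Z wcomm n t x"
  unfolding tau_eq transfer_def
  using assms transfer_factor_in_B wcomm_central
  by (intro group.list_prod_upt_central[OF Q_group]) auto

lemma tau_hom:
  assumes rt: "right_transversal G B n t"
  shows "tau G B w ys n t \<in> hom G Q"
proof -
  have "transfer Z wcomm n t \<in> hom G Z"
    by (rule transfer_hom[OF rt group.centre_comm_group[OF Q_group] wcomm_hom])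
  then show ?thesis
    using tau_eq_transfer[OF rt] subgroup.subset[OF group.centre_subgroup[OF Q_group]]
    by (auto simp: hom_def)
qed

lemma tau_indep:
  assumes "right_transversal G B n t" "right_transversal G B n t'" "x \<in> carrier G"
  shows "tau G B w ys n t' x = tau G B w ys n t x"
  using assms tau_eq_transfer transfer_indep group.centre_comm_group[OF Q_group] wcomm_hom
  by metis

lemma marginal_comm_power:
  assumes x: "x \<in> marginal G w"
  shows "comm G W (x [^] (k::nat)) = comm G W x [^] int k"
  using marginal_comm_conj_pow[OF ys_length ys_carrier x one_closed, of "int k"] x
  by (simp add: int_pow_int marginal_def)

lemma tau_marginal:
  assumes rt: "right_transversal G B n t" and x: "x \<in> marginal G w"
  shows "comm G W (x [^] n) \<in> B \<and> tau G B w ys n t x = proj (comm G W (x [^] n))"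
proof -
  have xC: "x \<in> carrier G" using x by (simp add: marginal_def)
  obtain t' h e where rt': "right_transversal G B n t'"
    and h: "\<And>i. i < n \<Longrightarrow> h i \<in> carrier G"
    and factor: "\<And>i. i < n \<Longrightarrow> transfer_factor n t' x i = h i \<otimes> x [^] e i \<otimes> inv (h i)"
    and e: "(\<Sum>i<n. e i) = int n"
    by (rule cycle_adapted_transversal[OF rt xC]) blast
  define z where "z = comm G W x"
  have z: "z \<in> carrier G" unfolding z_def using comm_closed[OF is_group] word_value_in_B B_carrier xC by blast
  have comm_factor: "comm G W (transfer_factor n t' x i) = z [^] e i" if "i < n" for i
    unfolding factor[OF that] z_def by (rule marginal_comm_conj_pow[OF ys_length ys_carrier x h[OF that]])
  have zB: "z [^] e i \<in> B" if "i < n" for i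
    using comm_factor[OF that] comm_in_B[OF word_value_in_B transfer_factor_in_B[OF rt' xC that]] by simp
  have powers: "list_prod G (map (\<lambda>i. z [^] e i) [0..<n]) = comm G W (x [^] n)"
    using int_pow_list_prod[OF z, of e "[0..<n]"] e sum_set_upt_conv_sum_list_nat[of e 0 n]
      marginal_comm_power[OF x, of n]
    by (simp add: atLeast0LessThan z_def)
  have "tau G B w ys n t x = tau G B w ys n t' x"
    using tau_indep[OF rt rt' xC] by simp
  also have "\<dots> = list_prod Q (map proj (map (\<lambda>i. z [^] e i) [0..<n]))"
    unfolding tau_eq map_map
    by (intro arg_cong[where f = "list_prod Q"] map_cong)
      (auto simp: wcomm_proj transfer_factor_in_B[OF rt' xC] comm_factor)
  also have "\<dots> = proj (list_prod G (map (\<lambda>i. z [^] e i) [0..<n]))"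
    by (rule proj_list_prod) (use zB in auto)
  also have "\<dots> = proj (comm G W (x [^] n))"
    by (simp only: powers)
  moreover have "comm G W (x [^] n) \<in> B"
    using list_prod_in_B[of "map (\<lambda>i. z [^] e i) [0..<n]"] zB powers by (auto simp: image_subset_iff)
  ultimately show ?thesis by simp
qed

end

theorem proposition3p4:
  fixes E :: "('a, 'b) monoid_scheme" and B :: "'a set" and w :: ocword
    and ys :: "'a list" and n :: nat and t :: "nat \<Rightarrow> 'a"
  assumes "group E"
    and "subgroup B E"
    and "finite (rcosets\<^bsub>E\<^esub> B)"
    and "card (rcosets\<^bsub>E\<^esub> B) = n"
    and "right_transversal E B n t"
    and "length ys = weight w"
    and "set ys \<subseteq> B"
  shows "(\<forall>x \<in> carrier E. \<forall>i < n.
            t i \<otimes>\<^bsub>E\<^esub> x \<otimes>\<^bsub>E\<^esub> inv\<^bsub>E\<^esub> (trep E B n t (t i \<otimes>\<^bsub>E\<^esub> x)) \<in> B)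
       \<and> tau E B w ys n t \<in> hom E (BmodV E B w)
       \<and> (\<forall>t'. right_transversal E B n t' \<longrightarrow>
              (\<forall>x \<in> carrier E. tau E B w ys n t' x = tau E B w ys n t x))
       \<and> (\<forall>x \<in> marginal E w.
              comm E (oc_eval E w ys) (x [^]\<^bsub>E\<^esub> n) \<in> B
            \<and> tau E B w ys n t x = natpi E B w (comm E (oc_eval E w ys) (x [^]\<^bsub>E\<^esub> n)))"
proof -
  interpret verbal_quotient E B w ys
    using assms(1,2,6,7)
    by (simp add: verbal_quotient_def verbal_quotient_axioms_def
        transversal_setting_def transversal_setting_axioms_def)
  show ?thesis
    using transfer_factor_in_B[OF assms(5)] tau_hom[OF assms(5)]
      tau_indep[OF assms(5)] tau_marginal[OF assms(5)]
    unfolding transfer_factor_def by blast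
qed

end
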